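(* Let $H_1,\dots,H_K$ be half spaces in $\mathbb{R}^n$ such that the sets $H_i\cap B_2$, $i=1,\dots,K$, are pairwise disjoint. Then at most two of the half spaces $H_i$ intersect $B_1$.
   Context: $B_r$ denotes the open ball of radius $r$ centered at the origin in $\mathbb{R}^n$. *)

theory Defs
  imports "HOL-Analysis.Analysis"
begin

definition halfspace :: "'a::euclidean_space set \<Rightarrow> bool" where
  "halfspace H \<longleftrightarrow> (\<exists>a b. a \<noteq> 0 \<and> H = {x. inner a x \<le> b})"

end

theory Submission
  imports Defs
begin

text \<open>Write each half space meeting \<open>B\<^sub>1\<close> as \<open>{x. u \<bullet> x \<le> c}\<close> with \<open>|u| = 1\<close> and \<open>c > -1\<close>.
  If two such half spaces are disjoint inside \<open>B\<^sub>2\<close>, their normals make an angle of more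
  than \<open>2\<pi>/3\<close>: otherwise the point on the ray through \<open>-(u + v)\<close> lying on both boundary
  hyperplanes (or the origin, if \<open>c, d \<ge> 0\<close>) is a common point of norm less than 2.
  Three unit vectors cannot pairwise have inner product below \<open>-1/2\<close>, since
  \<open>|u + v + w|\<^sup>2 \<ge> 0\<close>.\<close>

lemma halfspace_unit_normal:
  fixes H :: "'a::euclidean_space set"
  assumes "halfspace H"
  obtains u c where "norm u = 1" "H = {x. inner u x \<le> c}"
proof -
  obtain a b where "a \<noteq> 0" and H: "H = {x. inner a x \<le> b}"
    using assms halfspace_def by blast
  then have "norm a > 0" by simp
  then have "inner a x \<le> b \<longleftrightarrow> inner (a /\<^sub>R norm a) x \<le> b / norm a" for x
    by (simp add: field_simps)
  with H \<open>norm a > 0\<close> show thesis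
    by (intro that[of "a /\<^sub>R norm a" "b / norm a"]) auto
qed

lemma unit_halfspace_meets_ballD:
  fixes u :: "'a::real_inner"
  assumes "norm u = 1" "{x. inner u x \<le> c} \<inter> ball 0 r \<noteq> {}"
  shows "- r < c"
proof -
  obtain x where x: "inner u x \<le> c" "norm x < r" using assms(2) by auto
  have "- inner u x \<le> norm x"
    using Cauchy_Schwarz_ineq2[of u x] assms(1) by (simp add: abs_le_iff)
  with x show ?thesis by linarith
qed

lemma halfspace_meets_ball_unit_normal:
  fixes H :: "'a::euclidean_space set"
  assumes "halfspace H" "H \<inter> ball 0 r \<noteq> {}"
  obtains u c where "norm u = 1" "H = {x. inner u x \<le> c}" "- r < c"
proof -
  obtain u c where u: "norm u = 1" and H: "H = {x. inner u x \<le> c}"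
    using assms(1) by (rule halfspace_unit_normal)
  moreover have "- r < c"
    using assms(2) unfolding H by (rule unit_halfspace_meets_ballD[OF u])
  ultimately show thesis by (rule that)
qed

lemma unit_halfspaces_disjoint_in_ball_inner_less:
  fixes u v :: "'a::real_inner"
  assumes "norm u = 1" "norm v = 1" "0 < r" "- r < c" "- r < d"
    and disjoint: "{x. inner u x \<le> c} \<inter> {x. inner v x \<le> d} \<inter> ball 0 (2 * r) = {}"
  shows "inner u v < - 1/2"
proof (rule ccontr)
  define \<gamma> where "\<gamma> = inner u v"
  define \<beta> where "\<beta> = max 0 (max (- c) (- d))"
  define x where "x = - (\<beta> / (1 + \<gamma>)) *\<^sub>R (u + v)"
  assume "\<not> inner u v < - 1/2"
  then have \<gamma>: "1 + \<gamma> \<ge> 1/2" by (simp add: \<gamma>_def)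
  have \<beta>: "0 \<le> \<beta>" "\<beta> < r" using assms(3-5) by (auto simp: \<beta>_def)
  have uu: "inner u u = 1" "inner v v = 1"
    using assms(1,2) by (simp_all add: power2_norm_eq_inner[symmetric])
  have "inner u x = - \<beta>" "inner v x = - \<beta>"
    using \<gamma> uu by (simp_all add: x_def \<gamma>_def inner_add_right inner_commute add.commute)
  then have "x \<in> {x. inner u x \<le> c} \<inter> {x. inner v x \<le> d}"
    by (auto simp: \<beta>_def)
  moreover have "(norm x)\<^sup>2 = 2 * \<beta>\<^sup>2 / (1 + \<gamma>)"
  proof -
    have "inner (u + v) (u + v) = 2 * (1 + \<gamma>)"
      using uu by (simp add: inner_add_right inner_add_left \<gamma>_def inner_commute)
    then have "(norm x)\<^sup>2 = (\<beta> / (1 + \<gamma>))\<^sup>2 * (2 * (1 + \<gamma>))"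
      unfolding power2_norm_eq_inner x_def by (simp add: power2_eq_square)
    also have "\<dots> = 2 * \<beta>\<^sup>2 / (1 + \<gamma>)"
      using \<gamma> by (simp add: power2_eq_square divide_simps)
    finally show ?thesis .
  qed
  moreover have "2 * \<beta>\<^sup>2 / (1 + \<gamma>) \<le> (2 * \<beta>)\<^sup>2"
  proof -
    have "\<beta>\<^sup>2 * 1 \<le> \<beta>\<^sup>2 * (2 * (1 + \<gamma>))"
      using \<gamma> by (intro mult_left_mono) auto
    then show ?thesis
      using \<gamma> by (simp add: divide_le_eq power2_eq_square algebra_simps)
  qed
  ultimately have "norm x \<le> 2 * \<beta>"
    using \<beta>(1) by (metis power2_le_imp_le mult_nonneg_nonneg zero_le_numeral)
  then have "x \<in> ball 0 (2 * r)" using \<beta>(2) by simp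
  with \<open>x \<in> _ \<inter> _\<close> disjoint show False by blast
qed

lemma unit_vectors_not_pairwise_obtuse:
  fixes u v w :: "'a::real_inner"
  assumes "norm u = 1" "norm v = 1" "norm w = 1"
  shows "\<not> (inner u v < - 1/2 \<and> inner u w < - 1/2 \<and> inner v w < - 1/2)"
proof -
  have "inner u u = 1" "inner v v = 1" "inner w w = 1"
    using assms by (simp_all add: power2_norm_eq_inner[symmetric])
  then have "inner (u + v + w) (u + v + w) = 3 + 2 * (inner u v + inner u w + inner v w)"
    by (simp add: inner_add_right inner_add_left inner_commute)
  moreover have "0 \<le> inner (u + v + w) (u + v + w)" by (rule inner_ge_zero)
  ultimately show ?thesis by argo
qed

theorem lemma4p9:
  fixes H :: "nat \<Rightarrow> 'a::euclidean_space set" and K :: nat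
  assumes "\<forall>i\<in>{1..K}. halfspace (H i)"
    and "\<forall>i\<in>{1..K}. \<forall>j\<in>{1..K}. i \<noteq> j \<longrightarrow>
           (H i \<inter> ball 0 2) \<inter> (H j \<inter> ball 0 2) = {}"
  shows "card {i\<in>{1..K}. H i \<inter> ball 0 1 \<noteq> {}} \<le> 2"
proof (rule ccontr)
  define S where "S = {i\<in>{1..K}. H i \<inter> ball 0 1 \<noteq> {}}"
  have "\<exists>u c. norm u = 1 \<and> H m = {x. inner u x \<le> c} \<and> - 1 < c" if "m \<in> S" for m
  proof -
    have "halfspace (H m)" "H m \<inter> ball 0 1 \<noteq> {}"
      using that assms(1) unfolding S_def by auto
    then show ?thesis by (rule halfspace_meets_ball_unit_normal) blast
  qed
  then obtain u c where normal: "\<And>m. m \<in> S \<Longrightarrow>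
      norm (u m) = 1 \<and> H m = {x. inner (u m) x \<le> c m} \<and> - 1 < c m"
    by metis
  have obtuse: "inner (u m) (u n) < - 1/2" if "m \<in> S" "n \<in> S" "m \<noteq> n" for m n
  proof (rule unit_halfspaces_disjoint_in_ball_inner_less[where r = 1])
    have "H m \<inter> H n \<inter> ball 0 2 = {}"
      using that assms(2) unfolding S_def by blast
    then show "{x. inner (u m) x \<le> c m} \<inter> {x. inner (u n) x \<le> c n} \<inter> ball 0 (2 * 1) = {}"
      using normal[OF that(1)] normal[OF that(2)] by simp
  qed (use normal that in auto)
  assume "\<not> card {i\<in>{1..K}. H i \<inter> ball 0 1 \<noteq> {}} \<le> 2"
  then obtain T where "T \<subseteq> S" "card T = 3"
    by (metis S_def obtain_subset_with_card_n not_le Suc_leI numeral_2_eq_2 numeral_3_eq_3)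
  then obtain i j k where "i \<in> S" "j \<in> S" "k \<in> S" "i \<noteq> j" "i \<noteq> k" "j \<noteq> k"
    by (auto simp: card_3_iff)
  then show False
    using unit_vectors_not_pairwise_obtuse[of "u i" "u j" "u k"] normal obtuse by blast
qed

end
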